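(* Let $\mathcal C$ be a small strict 2-category. The assignment ${\rm i}\colon \operatorname{Tr}(\mathcal C)\to\operatorname{Tr}_{hor}(\mathcal C)$ given on objects by ${\rm i}(x)=(1_x\colon x\to x)$ and on morphisms by ${\rm i}([\sigma])=[f,\sigma]$ for a 2-endomorphism $\sigma\colon f\Rightarrow f$ of a 1-morphism $f\colon x\to y$ (viewing $\sigma$ as a 2-morphism $f\circ 1_x\Rightarrow 1_y\circ f$) is a well-defined functor which is full and faithful.
   Context: For a small category $\mathcal A$, $\operatorname{Tr}(\mathcal A)$ is the set of endomorphisms of $\mathcal A$ modulo the equivalence relation generated by $fg\sim gf$ for $f\colon x\to y$, $g\colon y\to x$. For a strict 2-category $\mathcal C$, the category $\operatorname{Tr}(\mathcal C)$ has the same objects as $\mathcal C$, hom-sets $\operatorname{Tr}(\mathcal C)(x,y)=\operatorname{Tr}(\mathcal C(x,y))$ (trace of the hom-category), composition $[\tau]\circ[\sigma]=[\tau\circ\sigma]$ (horizontal composition) and identities $[1_{1_x}]$. The horizontal trace $\operatorname{Tr}_{hor}(\mathcal C)$ is the category whose objects are 1-endomorphisms $f\colon x\to x$, $x\in\operatorname{Ob}(\mathcal C)$; a morphism from $f\colon x\to x$ to $g\colon y\to y$ is an equivalence class $[p,\sigma]$ of pairs consisting of a 1-morphism $p\colon x\to y$ and a 2-morphism $\sigma\colon p\circ f\Rightarrow g\circ p$, where the equivalence relation is generated by $(p,(g\circ\tau)\sigma)\sim(p',\sigma(\tau\circ f))$ for all $p,p'\colon x\to y$, $\sigma\colon p\circ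 f\Rightarrow g\circ p'$, $\tau\colon p'\Rightarrow p$. Composition is $[q,\tau][p,\sigma]=[qp,(\tau\circ p)(q\circ\sigma)]$ and identities are $[1_x,1_f]$. *)

theory Defs
  imports Main
begin

text \<open>Conventions:
  comp1 g f = g \<circ> f  (f first);  vcomp \<tau> \<sigma> = \<tau>\<sigma>  (\<sigma> first, vertical);
  hcomp \<tau> \<sigma> = \<tau> \<circ> \<sigma>  (horizontal; \<sigma> lives over x\<rightarrow>y, \<tau> over y\<rightarrow>z).\<close>

record ('o, 'a, 'b) two_cat =
  Ob    :: "'o set"
  Arr   :: "'a set"
  Cell  :: "'b set"
  dom1  :: "'a \<Rightarrow> 'o"
  cod1  :: "'a \<Rightarrow> 'o"
  id1   :: "'o \<Rightarrow> 'a"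
  comp1 :: "'a \<Rightarrow> 'a \<Rightarrow> 'a"
  src2  :: "'b \<Rightarrow> 'a"
  tgt2  :: "'b \<Rightarrow> 'a"
  id2   :: "'a \<Rightarrow> 'b"
  vcomp :: "'b \<Rightarrow> 'b \<Rightarrow> 'b"
  hcomp :: "'b \<Rightarrow> 'b \<Rightarrow> 'b"

definition strict_2cat :: "('o, 'a, 'b) two_cat \<Rightarrow> bool" where
  "strict_2cat C \<longleftrightarrow>
    \<comment> \<open>underlying 1-category\<close>
    (\<forall>f\<in>Arr C. dom1 C f \<in> Ob C \<and> cod1 C f \<in> Ob C) \<and>
    (\<forall>x\<in>Ob C. id1 C x \<in> Arr C \<and> dom1 C (id1 C x) = x \<and> cod1 C (id1 C x) = x) \<and>
    (\<forall>f\<in>Arr C. \<forall>g\<in>Arr C. cod1 C f = dom1 C g \<longrightarrow>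
        comp1 C g f \<in> Arr C \<and> dom1 C (comp1 C g f) = dom1 C f \<and> cod1 C (comp1 C g f) = cod1 C g) \<and>
    (\<forall>f\<in>Arr C. \<forall>g\<in>Arr C. \<forall>h\<in>Arr C. cod1 C f = dom1 C g \<longrightarrow> cod1 C g = dom1 C h \<longrightarrow>
        comp1 C h (comp1 C g f) = comp1 C (comp1 C h g) f) \<and>
    (\<forall>f\<in>Arr C. comp1 C f (id1 C (dom1 C f)) = f \<and> comp1 C (id1 C (cod1 C f)) f = f) \<and>
    \<comment> \<open>2-cells are parallel\<close>
    (\<forall>\<sigma>\<in>Cell C. src2 C \<sigma> \<in> Arr C \<and> tgt2 C \<sigma> \<in> Arr C \<and>
        dom1 C (src2 C \<sigma>) = dom1 C (tgt2 C \<sigma>) \<and> cod1 C (src2 C \<sigma>) = cod1 C (tgt2 C \<sigma>)) \<and>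
    \<comment> \<open>vertical category structure on each hom\<close>
    (\<forall>f\<in>Arr C. id2 C f \<in> Cell C \<and> src2 C (id2 C f) = f \<and> tgt2 C (id2 C f) = f) \<and>
    (\<forall>\<sigma>\<in>Cell C. \<forall>\<tau>\<in>Cell C. tgt2 C \<sigma> = src2 C \<tau> \<longrightarrow>
        vcomp C \<tau> \<sigma> \<in> Cell C \<and> src2 C (vcomp C \<tau> \<sigma>) = src2 C \<sigma> \<and> tgt2 C (vcomp C \<tau> \<sigma>) = tgt2 C \<tau>) \<and>
    (\<forall>\<sigma>\<in>Cell C. \<forall>\<tau>\<in>Cell C. \<forall>\<rho>\<in>Cell C. tgt2 C \<sigma> = src2 C \<tau> \<longrightarrow> tgt2 C \<tau> = src2 C \<rho> \<longrightarrow>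
        vcomp C \<rho> (vcomp C \<tau> \<sigma>) = vcomp C (vcomp C \<rho> \<tau>) \<sigma>) \<and>
    (\<forall>\<sigma>\<in>Cell C. vcomp C \<sigma> (id2 C (src2 C \<sigma>)) = \<sigma> \<and> vcomp C (id2 C (tgt2 C \<sigma>)) \<sigma> = \<sigma>) \<and>
    \<comment> \<open>horizontal composition is a functor\<close>
    (\<forall>\<sigma>\<in>Cell C. \<forall>\<tau>\<in>Cell C. cod1 C (src2 C \<sigma>) = dom1 C (src2 C \<tau>) \<longrightarrow>
        hcomp C \<tau> \<sigma> \<in> Cell C \<and> src2 C (hcomp C \<tau> \<sigma>) = comp1 C (src2 C \<tau>) (src2 C \<sigma>) \<and>
        tgt2 C (hcomp C \<tau> \<sigma>) = comp1 C (tgt2 C \<tau>) (tgt2 C \<sigma>)) \<and>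
    (\<forall>f\<in>Arr C. \<forall>g\<in>Arr C. cod1 C f = dom1 C g \<longrightarrow>
        hcomp C (id2 C g) (id2 C f) = id2 C (comp1 C g f)) \<and>
    (\<forall>\<sigma>\<in>Cell C. \<forall>\<sigma>'\<in>Cell C. \<forall>\<tau>\<in>Cell C. \<forall>\<tau>'\<in>Cell C.
        tgt2 C \<sigma> = src2 C \<sigma>' \<longrightarrow> tgt2 C \<tau> = src2 C \<tau>' \<longrightarrow> cod1 C (src2 C \<sigma>) = dom1 C (src2 C \<tau>) \<longrightarrow>
        hcomp C (vcomp C \<tau>' \<tau>) (vcomp C \<sigma>' \<sigma>) = vcomp C (hcomp C \<tau>' \<sigma>') (hcomp C \<tau> \<sigma>)) \<and>
    \<comment> \<open>strict associativity and unitality of horizontal composition\<close>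
    (\<forall>\<sigma>\<in>Cell C. \<forall>\<tau>\<in>Cell C. \<forall>\<rho>\<in>Cell C.
        cod1 C (src2 C \<sigma>) = dom1 C (src2 C \<tau>) \<longrightarrow> cod1 C (src2 C \<tau>) = dom1 C (src2 C \<rho>) \<longrightarrow>
        hcomp C \<rho> (hcomp C \<tau> \<sigma>) = hcomp C (hcomp C \<rho> \<tau>) \<sigma>) \<and>
    (\<forall>\<sigma>\<in>Cell C. hcomp C \<sigma> (id2 C (id1 C (dom1 C (src2 C \<sigma>)))) = \<sigma> \<and>
                 hcomp C (id2 C (id1 C (cod1 C (src2 C \<sigma>)))) \<sigma> = \<sigma>)"

definition equiv_gen :: "'x set \<Rightarrow> ('x \<times> 'x) set \<Rightarrow> ('x \<times> 'x) set" where
  "equiv_gen A R = \<Inter> {S. equiv A S \<and> R \<subseteq> S}"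

definition endo2 :: "('o,'a,'b) two_cat \<Rightarrow> 'o \<Rightarrow> 'o \<Rightarrow> 'b set" where
  "endo2 C x y = {\<sigma> \<in> Cell C. src2 C \<sigma> = tgt2 C \<sigma> \<and> dom1 C (src2 C \<sigma>) = x \<and> cod1 C (src2 C \<sigma>) = y}"

definition tr_gen :: "('o,'a,'b) two_cat \<Rightarrow> 'o \<Rightarrow> 'o \<Rightarrow> ('b \<times> 'b) set" where
  "tr_gen C x y = {(vcomp C g f, vcomp C f g) | f g. f \<in> Cell C \<and> g \<in> Cell C \<and>
      tgt2 C f = src2 C g \<and> tgt2 C g = src2 C f \<and> dom1 C (src2 C f) = x \<and> cod1 C (src2 C f) = y}"

definition trrel :: "('o,'a,'b) two_cat \<Rightarrow> 'o \<Rightarrow> 'o \<Rightarrow> ('b \<times> 'b) set" where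
  "trrel C x y = equiv_gen (endo2 C x y) (tr_gen C x y)"

definition tr_class :: "('o,'a,'b) two_cat \<Rightarrow> 'o \<Rightarrow> 'o \<Rightarrow> 'b \<Rightarrow> 'b set" where
  "tr_class C x y \<sigma> = trrel C x y `` {\<sigma>}"

definition tr_hom :: "('o,'a,'b) two_cat \<Rightarrow> 'o \<Rightarrow> 'o \<Rightarrow> 'b set set" where
  "tr_hom C x y = endo2 C x y // trrel C x y"

definition tr_comp :: "('o,'a,'b) two_cat \<Rightarrow> 'o \<Rightarrow> 'o \<Rightarrow> 'o \<Rightarrow> 'b set \<Rightarrow> 'b set \<Rightarrow> 'b set" where
  "tr_comp C x y z T S = tr_class C x z (hcomp C (SOME \<tau>. \<tau> \<in> T) (SOME \<sigma>. \<sigma> \<in> S))"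

definition tr_id :: "('o,'a,'b) two_cat \<Rightarrow> 'o \<Rightarrow> 'b set" where
  "tr_id C x = tr_class C x x (id2 C (id1 C x))"

definition hor_obj :: "('o,'a,'b) two_cat \<Rightarrow> 'a \<Rightarrow> bool" where
  "hor_obj C f \<longleftrightarrow> f \<in> Arr C \<and> dom1 C f = cod1 C f"

definition hor_pairs :: "('o,'a,'b) two_cat \<Rightarrow> 'a \<Rightarrow> 'a \<Rightarrow> ('a \<times> 'b) set" where
  "hor_pairs C f g = {(p, \<sigma>). p \<in> Arr C \<and> dom1 C p = dom1 C f \<and> cod1 C p = dom1 C g \<and>
      \<sigma> \<in> Cell C \<and> src2 C \<sigma> = comp1 C p f \<and> tgt2 C \<sigma> = comp1 C g p}"

definition hor_gen :: "('o,'a,'b) two_cat \<Rightarrow> 'a \<Rightarrow> 'a \<Rightarrow> (('a \<times> 'b) \<times> ('a \<times> 'b)) set" where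
  "hor_gen C f g = {((p, vcomp C (hcomp C (id2 C g) \<tau>) \<sigma>), (p', vcomp C \<sigma> (hcomp C \<tau> (id2 C f)))) | p p' \<sigma> \<tau>.
      p \<in> Arr C \<and> p' \<in> Arr C \<and> dom1 C p = dom1 C f \<and> cod1 C p = dom1 C g \<and>
      dom1 C p' = dom1 C f \<and> cod1 C p' = dom1 C g \<and>
      \<sigma> \<in> Cell C \<and> src2 C \<sigma> = comp1 C p f \<and> tgt2 C \<sigma> = comp1 C g p' \<and>
      \<tau> \<in> Cell C \<and> src2 C \<tau> = p' \<and> tgt2 C \<tau> = p}"

definition horrel :: "('o,'a,'b) two_cat \<Rightarrow> 'a \<Rightarrow> 'a \<Rightarrow> (('a \<times> 'b) \<times> ('a \<times> 'b)) set" where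
  "horrel C f g = equiv_gen (hor_pairs C f g) (hor_gen C f g)"

definition hor_class :: "('o,'a,'b) two_cat \<Rightarrow> 'a \<Rightarrow> 'a \<Rightarrow> 'a \<times> 'b \<Rightarrow> ('a \<times> 'b) set" where
  "hor_class C f g pa = horrel C f g `` {pa}"

definition hor_hom :: "('o,'a,'b) two_cat \<Rightarrow> 'a \<Rightarrow> 'a \<Rightarrow> ('a \<times> 'b) set set" where
  "hor_hom C f g = hor_pairs C f g // horrel C f g"

definition hor_comp :: "('o,'a,'b) two_cat \<Rightarrow> 'a \<Rightarrow> 'a \<Rightarrow> 'a \<Rightarrow> ('a \<times> 'b) set \<Rightarrow> ('a \<times> 'b) set \<Rightarrow> ('a \<times> 'b) set" where
  "hor_comp C f g h B A =
     (let (q, \<tau>) = (SOME b. b \<in> B); (p, \<sigma>) = (SOME a. a \<in> A)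
      in hor_class C f h (comp1 C q p, vcomp C (hcomp C \<tau> (id2 C p)) (hcomp C (id2 C q) \<sigma>)))"

definition hor_id :: "('o,'a,'b) two_cat \<Rightarrow> 'a \<Rightarrow> ('a \<times> 'b) set" where
  "hor_id C f = hor_class C f f (id1 C (dom1 C f), id2 C f)"

definition i_obj :: "('o,'a,'b) two_cat \<Rightarrow> 'o \<Rightarrow> 'a" where
  "i_obj C x = id1 C x"

definition i_rep :: "('o,'a,'b) two_cat \<Rightarrow> 'o \<Rightarrow> 'o \<Rightarrow> 'b \<Rightarrow> ('a \<times> 'b) set" where
  "i_rep C x y \<sigma> = hor_class C (id1 C x) (id1 C y) (src2 C \<sigma>, \<sigma>)"

definition i_mor :: "('o,'a,'b) two_cat \<Rightarrow> 'o \<Rightarrow> 'o \<Rightarrow> 'b set \<Rightarrow> ('a \<times> 'b) set" where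
  "i_mor C x y S = i_rep C x y (SOME \<sigma>. \<sigma> \<in> S)"

end

theory Submission
  imports Defs
begin

(* The whole argument rests on one observation: between identity endomorphisms the
   horizontal trace IS the trace of the hom-category.  A pair (p, \<sigma>) from 1_x to 1_y is
   just a 2-endomorphism \<sigma> : p \<Rightarrow> p (as p \<circ> 1_x = p = 1_y \<circ> p), and after cancelling the
   unit whiskerings the generating relation of Tr_hor becomes (src \<sigma>, \<tau>\<sigma>) ~ (src \<tau>, \<sigma>\<tau>),
   i.e. exactly the image of the generators \<tau>\<sigma> ~ \<sigma>\<tau> of Tr under \<sigma> \<mapsto> (src \<sigma>, \<sigma>). *)

section \<open>Generated equivalence relations\<close>

lemma equiv_equiv_gen:
  assumes "R \<subseteq> A \<times> A"
  shows "equiv A (equiv_gen A R)"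
proof -
  let ?F = "{S. equiv A S \<and> R \<subseteq> S}"
  have "A \<times> A \<in> ?F"
    using assms by (auto simp: equiv_def refl_on_def sym_def trans_def)
  then have "\<Inter> ?F \<subseteq> A \<times> A"
    by blast
  moreover have "refl_on A (\<Inter> ?F)"
    unfolding refl_on_def
  proof (intro ballI InterI)
    fix x S assume "x \<in> A" "S \<in> ?F"
    then show "(x, x) \<in> S" by (auto simp: equiv_def refl_on_def)
  qed
  moreover have "sym (\<Inter> ?F)"
  proof (rule symI, rule InterI)
    fix x y S assume "(x, y) \<in> \<Inter> ?F" "S \<in> ?F"
    then have "(x, y) \<in> S" "sym S" by (auto simp: equiv_def)
    then show "(y, x) \<in> S" by (rule symD[rotated])
  qed
  moreover have "trans (\<Inter> ?F)"
  proof (rule transI, rule InterI)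
    fix x y z S assume "(x, y) \<in> \<Inter> ?F" "(y, z) \<in> \<Inter> ?F" "S \<in> ?F"
    then have "(x, y) \<in> S" "(y, z) \<in> S" "trans S" by (auto simp: equiv_def)
    then show "(x, z) \<in> S" by (meson transD)
  qed
  ultimately show ?thesis
    unfolding equiv_gen_def by (rule equivI)
qed

lemma equiv_gen_generators: "R \<subseteq> equiv_gen A R"
  unfolding equiv_gen_def by blast

lemma equiv_gen_transfer:
  assumes gen: "R \<subseteq> A \<times> A" and S: "equiv B S"
    and maps: "\<And>a. a \<in> A \<Longrightarrow> h a \<in> B"
    and resp: "\<And>a b. (a, b) \<in> R \<Longrightarrow> (h a, h b) \<in> S"
    and ab: "(a, b) \<in> equiv_gen A R"
  shows "(h a, h b) \<in> S"
proof -
  let ?S = "{(a, b). a \<in> A \<and> b \<in> A \<and> (h a, h b) \<in> S}"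
  have "equiv A ?S"
    using S maps unfolding equiv_def refl_on_def sym_def trans_def by blast
  moreover have "R \<subseteq> ?S"
    using gen resp by blast
  ultimately have "equiv_gen A R \<subseteq> ?S"
    unfolding equiv_gen_def by blast
  then show ?thesis
    using ab by blast
qed

context
  fixes C :: "('o, 'a, 'b) two_cat"
  assumes C: "strict_2cat C"
begin

lemma id1_arr: "x \<in> Ob C \<Longrightarrow> id1 C x \<in> Arr C \<and> dom1 C (id1 C x) = x \<and> cod1 C (id1 C x) = x"
  using C[unfolded strict_2cat_def, THEN conjunct2, THEN conjunct1] by blast

lemma comp1_arr: "f \<in> Arr C \<Longrightarrow> g \<in> Arr C \<Longrightarrow> cod1 C f = dom1 C g \<Longrightarrow>
    comp1 C g f \<in> Arr C \<and> dom1 C (comp1 C g f) = dom1 C f \<and> cod1 C (comp1 C g f) = cod1 C g"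
  using C[unfolded strict_2cat_def, THEN conjunct2, THEN conjunct2, THEN conjunct1] by blast

lemma comp1_units: "f \<in> Arr C \<Longrightarrow> comp1 C f (id1 C (dom1 C f)) = f \<and> comp1 C (id1 C (cod1 C f)) f = f"
  using C[unfolded strict_2cat_def, THEN conjunct2, THEN conjunct2, THEN conjunct2, THEN conjunct2, THEN conjunct1] by blast

lemma cell_parallel: "\<sigma> \<in> Cell C \<Longrightarrow> src2 C \<sigma> \<in> Arr C \<and> tgt2 C \<sigma> \<in> Arr C \<and>
    dom1 C (src2 C \<sigma>) = dom1 C (tgt2 C \<sigma>) \<and> cod1 C (src2 C \<sigma>) = cod1 C (tgt2 C \<sigma>)"
  using C[unfolded strict_2cat_def, THEN conjunct2, THEN conjunct2, THEN conjunct2, THEN conjunct2, THEN conjunct2, THEN conjunct1] by blast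

lemma id2_cell: "f \<in> Arr C \<Longrightarrow> id2 C f \<in> Cell C \<and> src2 C (id2 C f) = f \<and> tgt2 C (id2 C f) = f"
  using C[unfolded strict_2cat_def, THEN conjunct2, THEN conjunct2, THEN conjunct2, THEN conjunct2, THEN conjunct2, THEN conjunct2, THEN conjunct1] by blast

lemma vcomp_cell: "\<sigma> \<in> Cell C \<Longrightarrow> \<tau> \<in> Cell C \<Longrightarrow> tgt2 C \<sigma> = src2 C \<tau> \<Longrightarrow>
    vcomp C \<tau> \<sigma> \<in> Cell C \<and> src2 C (vcomp C \<tau> \<sigma>) = src2 C \<sigma> \<and> tgt2 C (vcomp C \<tau> \<sigma>) = tgt2 C \<tau>"
  using C[unfolded strict_2cat_def, THEN conjunct2, THEN conjunct2, THEN conjunct2, THEN conjunct2, THEN conjunct2, THEN conjunct2, THEN conjunct2, THEN conjunct1] by blast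

lemma vcomp_units: "\<sigma> \<in> Cell C \<Longrightarrow> vcomp C \<sigma> (id2 C (src2 C \<sigma>)) = \<sigma> \<and> vcomp C (id2 C (tgt2 C \<sigma>)) \<sigma> = \<sigma>"
  using C[unfolded strict_2cat_def, THEN conjunct2, THEN conjunct2, THEN conjunct2, THEN conjunct2, THEN conjunct2, THEN conjunct2, THEN conjunct2, THEN conjunct2, THEN conjunct2, THEN conjunct1] by blast

lemma hcomp_cell: "\<sigma> \<in> Cell C \<Longrightarrow> \<tau> \<in> Cell C \<Longrightarrow> cod1 C (src2 C \<sigma>) = dom1 C (src2 C \<tau>) \<Longrightarrow>
    hcomp C \<tau> \<sigma> \<in> Cell C \<and> src2 C (hcomp C \<tau> \<sigma>) = comp1 C (src2 C \<tau>) (src2 C \<sigma>) \<and>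
    tgt2 C (hcomp C \<tau> \<sigma>) = comp1 C (tgt2 C \<tau>) (tgt2 C \<sigma>)"
  using C[unfolded strict_2cat_def, THEN conjunct2, THEN conjunct2, THEN conjunct2, THEN conjunct2, THEN conjunct2, THEN conjunct2, THEN conjunct2, THEN conjunct2, THEN conjunct2, THEN conjunct2, THEN conjunct1] by blast

lemma interchange: "\<sigma> \<in> Cell C \<Longrightarrow> \<sigma>' \<in> Cell C \<Longrightarrow> \<tau> \<in> Cell C \<Longrightarrow> \<tau>' \<in> Cell C \<Longrightarrow>
    tgt2 C \<sigma> = src2 C \<sigma>' \<Longrightarrow> tgt2 C \<tau> = src2 C \<tau>' \<Longrightarrow> cod1 C (src2 C \<sigma>) = dom1 C (src2 C \<tau>) \<Longrightarrow>
    hcomp C (vcomp C \<tau>' \<tau>) (vcomp C \<sigma>' \<sigma>) = vcomp C (hcomp C \<tau>' \<sigma>') (hcomp C \<tau> \<sigma>)"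
  using C[unfolded strict_2cat_def, THEN conjunct2, THEN conjunct2, THEN conjunct2, THEN conjunct2, THEN conjunct2, THEN conjunct2, THEN conjunct2, THEN conjunct2, THEN conjunct2, THEN conjunct2, THEN conjunct2, THEN conjunct2, THEN conjunct1] by blast

lemma hcomp_units: "\<sigma> \<in> Cell C \<Longrightarrow> hcomp C \<sigma> (id2 C (id1 C (dom1 C (src2 C \<sigma>)))) = \<sigma> \<and>
    hcomp C (id2 C (id1 C (cod1 C (src2 C \<sigma>)))) \<sigma> = \<sigma>"
  using C[unfolded strict_2cat_def, THEN conjunct2, THEN conjunct2, THEN conjunct2, THEN conjunct2, THEN conjunct2, THEN conjunct2, THEN conjunct2, THEN conjunct2, THEN conjunct2, THEN conjunct2, THEN conjunct2, THEN conjunct2, THEN conjunct2, THEN conjunct2] by blast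

section \<open>The trace relation is a congruence for horizontal composition\<close>

lemma endo2_iff: "\<sigma> \<in> endo2 C x y \<longleftrightarrow>
    \<sigma> \<in> Cell C \<and> src2 C \<sigma> = tgt2 C \<sigma> \<and> dom1 C (src2 C \<sigma>) = x \<and> cod1 C (src2 C \<sigma>) = y"
  unfolding endo2_def by blast

lemma tr_genE:
  assumes "(u, v) \<in> tr_gen C x y"
  obtains f g where "u = vcomp C g f" "v = vcomp C f g" "f \<in> Cell C" "g \<in> Cell C"
    "tgt2 C f = src2 C g" "tgt2 C g = src2 C f" "dom1 C (src2 C f) = x" "cod1 C (src2 C f) = y"
  using assms unfolding tr_gen_def by blast

lemma tr_gen_endo: "tr_gen C x y \<subseteq> endo2 C x y \<times> endo2 C x y"
proof (clarify)
  fix u v assume "(u, v) \<in> tr_gen C x y"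
  then obtain f g where uv: "u = vcomp C g f" "v = vcomp C f g" and fg: "f \<in> Cell C" "g \<in> Cell C"
      "tgt2 C f = src2 C g" "tgt2 C g = src2 C f" "dom1 C (src2 C f) = x" "cod1 C (src2 C f) = y"
    by (rule tr_genE)
  have "dom1 C (src2 C g) = x" "cod1 C (src2 C g) = y"
    using fg cell_parallel[of f] by metis+
  then show "u \<in> endo2 C x y \<and> v \<in> endo2 C x y"
    using uv fg vcomp_cell[of f g] vcomp_cell[of g f] by (simp add: endo2_iff)
qed

lemma trrel_equiv: "equiv (endo2 C x y) (trrel C x y)"
  unfolding trrel_def by (rule equiv_equiv_gen[OF tr_gen_endo])

lemma tr_gen_trrel: "(u, v) \<in> tr_gen C x y \<Longrightarrow> (u, v) \<in> trrel C x y"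
  unfolding trrel_def using equiv_gen_generators by blast

lemma trrel_endo: "(\<sigma>, \<sigma>') \<in> trrel C x y \<Longrightarrow> \<sigma> \<in> endo2 C x y \<and> \<sigma>' \<in> endo2 C x y"
  using equiv_type[OF trrel_equiv] by blast

text \<open>Every 2-endomorphism is trace-related to itself already by a generator, namely
  \<sigma> = 1 \<sigma> ~ \<sigma> 1.\<close>
lemma endo_tr_gen:
  assumes "\<sigma> \<in> endo2 C x y"
  shows "(\<sigma>, \<sigma>) \<in> tr_gen C x y"
proof -
  have \<sigma>: "\<sigma> \<in> Cell C" "src2 C \<sigma> = tgt2 C \<sigma>" "dom1 C (src2 C \<sigma>) = x" "cod1 C (src2 C \<sigma>) = y"
    using assms by (auto simp: endo2_iff)
  let ?e = "id2 C (src2 C \<sigma>)"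
  have e: "?e \<in> Cell C" "src2 C ?e = src2 C \<sigma>" "tgt2 C ?e = src2 C \<sigma>"
    using id2_cell[OF conjunct1[OF cell_parallel[OF \<sigma>(1)]]] by auto
  have "vcomp C ?e \<sigma> = \<sigma>" "vcomp C \<sigma> ?e = \<sigma>"
    using vcomp_units[OF \<sigma>(1)] \<sigma>(2) by auto
  then show ?thesis
    unfolding tr_gen_def using \<sigma> e by (intro CollectI exI[of _ \<sigma>] exI[of _ ?e]) auto
qed

text \<open>If u = gf, v = fg and u' = g'f', v' = f'g', then by interchange
  u' \<circ> u = (g' \<circ> g)(f' \<circ> f) and v' \<circ> v = (f' \<circ> f)(g' \<circ> g).\<close>
lemma hcomp_tr_gen:
  assumes "(u, v) \<in> tr_gen C x y" and "(u', v') \<in> tr_gen C y z"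
  shows "(hcomp C u' u, hcomp C v' v) \<in> tr_gen C x z"
proof -
  obtain f g where uv: "u = vcomp C g f" "v = vcomp C f g" and fg: "f \<in> Cell C" "g \<in> Cell C"
      "tgt2 C f = src2 C g" "tgt2 C g = src2 C f" "dom1 C (src2 C f) = x" "cod1 C (src2 C f) = y"
    using assms(1) by (rule tr_genE)
  obtain f' g' where uv': "u' = vcomp C g' f'" "v' = vcomp C f' g'" and fg': "f' \<in> Cell C" "g' \<in> Cell C"
      "tgt2 C f' = src2 C g'" "tgt2 C g' = src2 C f'" "dom1 C (src2 C f') = y" "cod1 C (src2 C f') = z"
    using assms(2) by (rule tr_genE)
  have f: "src2 C f \<in> Arr C" "cod1 C (src2 C g) = y"
    using cell_parallel[OF fg(1)] fg(3,6) by auto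
  have f': "src2 C f' \<in> Arr C" "dom1 C (src2 C g') = y"
    using cell_parallel[OF fg'(1)] fg'(3,5) by auto
  define F where "F = hcomp C f' f"
  define G where "G = hcomp C g' g"
  have F: "F \<in> Cell C" "src2 C F = comp1 C (src2 C f') (src2 C f)"
      "tgt2 C F = comp1 C (src2 C g') (src2 C g)"
    using hcomp_cell[OF fg(1) fg'(1)] fg(3,6) fg'(3,5) unfolding F_def by auto
  have G: "G \<in> Cell C" "src2 C G = comp1 C (src2 C g') (src2 C g)"
      "tgt2 C G = comp1 C (src2 C f') (src2 C f)"
    using hcomp_cell[OF fg(2) fg'(2)] fg(4) fg'(4) f(2) f'(2) unfolding G_def by auto
  have F_bounds: "dom1 C (src2 C F) = x" "cod1 C (src2 C F) = z"
    using F(2) comp1_arr[OF f(1) f'(1)] fg(5,6) fg'(5,6) by auto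
  have "vcomp C G F = hcomp C u' u"
    unfolding uv uv' F_def G_def
    using interchange[OF fg(1) fg(2) fg'(1) fg'(2) fg(3) fg'(3)] fg(6) fg'(5) by simp
  moreover have "vcomp C F G = hcomp C v' v"
    unfolding uv uv' F_def G_def
    using interchange[OF fg(2) fg(1) fg'(2) fg'(1) fg(4) fg'(4)] f(2) f'(2) by simp
  moreover have "(vcomp C G F, vcomp C F G) \<in> tr_gen C x z"
    unfolding tr_gen_def using F G F_bounds by (intro CollectI exI[of _ F] exI[of _ G]) simp
  ultimately show ?thesis
    by simp
qed

lemma hcomp_endo: "\<sigma> \<in> endo2 C x y \<Longrightarrow> \<tau> \<in> endo2 C y z \<Longrightarrow> hcomp C \<tau> \<sigma> \<in> endo2 C x z"
  using hcomp_tr_gen[OF endo_tr_gen endo_tr_gen] tr_gen_endo by blast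

text \<open>Horizontal composition descends to Tr(C): it respects the trace relation in each
  variable, because whiskering a generator by an endomorphism gives a generator.\<close>
lemma hcomp_trrel:
  assumes \<sigma>: "(\<sigma>, \<sigma>') \<in> trrel C x y" and \<tau>: "(\<tau>, \<tau>') \<in> trrel C y z"
  shows "(hcomp C \<tau> \<sigma>, hcomp C \<tau>' \<sigma>') \<in> trrel C x z"
proof -
  have endos: "\<sigma> \<in> endo2 C x y" "\<sigma>' \<in> endo2 C x y" "\<tau> \<in> endo2 C y z" "\<tau>' \<in> endo2 C y z"
    using trrel_endo \<sigma> \<tau> by blast+
  have "(hcomp C \<tau> \<sigma>, hcomp C \<tau> \<sigma>') \<in> trrel C x z"
  proof (rule equiv_gen_transfer[OF tr_gen_endo trrel_equiv, where h = "hcomp C \<tau>"])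
    show "hcomp C \<tau> a \<in> endo2 C x z" if "a \<in> endo2 C x y" for a
      using hcomp_endo[OF that endos(3)] .
    show "(hcomp C \<tau> a, hcomp C \<tau> b) \<in> trrel C x z" if "(a, b) \<in> tr_gen C x y" for a b
      using tr_gen_trrel hcomp_tr_gen[OF that endo_tr_gen[OF endos(3)]] by blast
    show "(\<sigma>, \<sigma>') \<in> equiv_gen (endo2 C x y) (tr_gen C x y)"
      using \<sigma> unfolding trrel_def .
  qed
  moreover have "(hcomp C \<tau> \<sigma>', hcomp C \<tau>' \<sigma>') \<in> trrel C x z"
  proof (rule equiv_gen_transfer[OF tr_gen_endo trrel_equiv, where h = "\<lambda>t. hcomp C t \<sigma>'"])
    show "hcomp C a \<sigma>' \<in> endo2 C x z" if "a \<in> endo2 C y z" for a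
      using hcomp_endo[OF endos(2) that] .
    show "(hcomp C a \<sigma>', hcomp C b \<sigma>') \<in> trrel C x z" if "(a, b) \<in> tr_gen C y z" for a b
      using tr_gen_trrel hcomp_tr_gen[OF endo_tr_gen[OF endos(2)] that] by blast
    show "(\<tau>, \<tau>') \<in> equiv_gen (endo2 C y z) (tr_gen C y z)"
      using \<tau> unfolding trrel_def .
  qed
  ultimately show ?thesis
    using trrel_equiv unfolding equiv_def trans_def by blast
qed

section \<open>The horizontal trace between identity endomorphisms\<close>

lemma comp1_id1:
  assumes "f \<in> Arr C"
  shows "dom1 C f = x \<Longrightarrow> comp1 C f (id1 C x) = f" and "cod1 C f = y \<Longrightarrow> comp1 C (id1 C y) f = f"
  using comp1_units[OF assms] by auto

lemma hcomp_id1: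
  assumes "\<sigma> \<in> Cell C"
  shows "dom1 C (src2 C \<sigma>) = x \<Longrightarrow> hcomp C \<sigma> (id2 C (id1 C x)) = \<sigma>"
    and "cod1 C (src2 C \<sigma>) = y \<Longrightarrow> hcomp C (id2 C (id1 C y)) \<sigma> = \<sigma>"
  using hcomp_units[OF assms] by auto

lemma hor_pairs_id:
  assumes x: "x \<in> Ob C" and y: "y \<in> Ob C"
  shows "(p, \<sigma>) \<in> hor_pairs C (id1 C x) (id1 C y) \<longleftrightarrow> \<sigma> \<in> endo2 C x y \<and> p = src2 C \<sigma>"
proof
  assume "(p, \<sigma>) \<in> hor_pairs C (id1 C x) (id1 C y)"
  then have h: "p \<in> Arr C" "dom1 C p = x" "cod1 C p = y" "\<sigma> \<in> Cell C"
      "src2 C \<sigma> = comp1 C p (id1 C x)" "tgt2 C \<sigma> = comp1 C (id1 C y) p"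
    unfolding hor_pairs_def using id1_arr x y by auto
  then show "\<sigma> \<in> endo2 C x y \<and> p = src2 C \<sigma>"
    using comp1_id1[OF h(1)] by (simp add: endo2_iff)
next
  assume h: "\<sigma> \<in> endo2 C x y \<and> p = src2 C \<sigma>"
  then have p: "p \<in> Arr C"
    using cell_parallel by (auto simp: endo2_iff)
  then show "(p, \<sigma>) \<in> hor_pairs C (id1 C x) (id1 C y)"
    unfolding hor_pairs_def using h comp1_id1[OF p] id1_arr x y by (auto simp: endo2_iff)
qed

text \<open>After cancelling the unit whiskerings, a generator of Tr_hor between identities is
  the image of a trace generator \<tau>\<sigma> ~ \<sigma>\<tau> under \<sigma> \<mapsto> (src \<sigma>, \<sigma>) \<dots>\<close>
lemma hor_gen_id_tr_gen:
  assumes x: "x \<in> Ob C" and y: "y \<in> Ob C" and ab: "(a, b) \<in> hor_gen C (id1 C x) (id1 C y)"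
  obtains u v where "(u, v) \<in> tr_gen C x y" "a = (src2 C u, u)" "b = (src2 C v, v)"
proof -
  have ix: "dom1 C (id1 C x) = x" and iy: "dom1 C (id1 C y) = y"
    using id1_arr x y by auto
  obtain p p' \<sigma> \<tau> where ab: "a = (p, vcomp C (hcomp C (id2 C (id1 C y)) \<tau>) \<sigma>)"
      "b = (p', vcomp C \<sigma> (hcomp C \<tau> (id2 C (id1 C x))))"
    and h: "p \<in> Arr C" "p' \<in> Arr C" "dom1 C p = x" "cod1 C p = y" "dom1 C p' = x" "cod1 C p' = y"
      "\<sigma> \<in> Cell C" "src2 C \<sigma> = comp1 C p (id1 C x)" "tgt2 C \<sigma> = comp1 C (id1 C y) p'"
      "\<tau> \<in> Cell C" "src2 C \<tau> = p'" "tgt2 C \<tau> = p"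
    using ab unfolding hor_gen_def ix iy by blast
  have \<sigma>: "src2 C \<sigma> = p" "tgt2 C \<sigma> = p'"
    using h comp1_id1[OF h(1)] comp1_id1[OF h(2)] by simp_all
  have \<tau>: "hcomp C (id2 C (id1 C y)) \<tau> = \<tau>" "hcomp C \<tau> (id2 C (id1 C x)) = \<tau>"
    using hcomp_id1[OF h(10)] h(5,6,11) by simp_all
  have "(vcomp C \<tau> \<sigma>, vcomp C \<sigma> \<tau>) \<in> tr_gen C x y"
    unfolding tr_gen_def using h \<sigma> by (intro CollectI exI[of _ \<sigma>] exI[of _ \<tau>]) simp
  moreover have "src2 C (vcomp C \<tau> \<sigma>) = p" "src2 C (vcomp C \<sigma> \<tau>) = p'"
    using vcomp_cell[OF h(7) h(10)] vcomp_cell[OF h(10) h(7)] h \<sigma> by simp_all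
  ultimately show ?thesis
    using that ab \<tau> by simp
qed

lemma tr_gen_hor_gen_id:
  assumes x: "x \<in> Ob C" and y: "y \<in> Ob C" and uv: "(u, v) \<in> tr_gen C x y"
  shows "((src2 C u, u), (src2 C v, v)) \<in> hor_gen C (id1 C x) (id1 C y)"
proof -
  have ix: "dom1 C (id1 C x) = x" and iy: "dom1 C (id1 C y) = y"
    using id1_arr x y by auto
  obtain f g where fg: "u = vcomp C g f" "v = vcomp C f g" "f \<in> Cell C" "g \<in> Cell C"
      "tgt2 C f = src2 C g" "tgt2 C g = src2 C f" "dom1 C (src2 C f) = x" "cod1 C (src2 C f) = y"
    using uv by (rule tr_genE)
  have arrs: "src2 C f \<in> Arr C" "src2 C g \<in> Arr C"
    using cell_parallel[OF fg(3)] cell_parallel[OF fg(4)] by auto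
  have g: "dom1 C (src2 C g) = x" "cod1 C (src2 C g) = y"
    using cell_parallel[OF fg(3)] fg(5,7,8) by auto
  have src_uv: "src2 C u = src2 C f" "src2 C v = src2 C g"
    using vcomp_cell[OF fg(3) fg(4)] vcomp_cell[OF fg(4) fg(3)] fg by simp_all
  show ?thesis
    unfolding hor_gen_def ix iy src_uv
    using fg arrs g comp1_id1[OF arrs(1)] comp1_id1[OF arrs(2)] hcomp_id1[OF fg(4)]
    by (intro CollectI exI[of _ "src2 C f"] exI[of _ "src2 C g"] exI[of _ f] exI[of _ g]) simp
qed

lemma hor_gen_id_pairs:
  assumes "x \<in> Ob C" "y \<in> Ob C"
  shows "hor_gen C (id1 C x) (id1 C y) \<subseteq> hor_pairs C (id1 C x) (id1 C y) \<times> hor_pairs C (id1 C x) (id1 C y)"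
proof (clarify)
  fix a b assume "(a, b) \<in> hor_gen C (id1 C x) (id1 C y)"
  then obtain u v where "(u, v) \<in> tr_gen C x y" "a = (src2 C u, u)" "b = (src2 C v, v)"
    using hor_gen_id_tr_gen[OF assms] by blast
  then show "a \<in> hor_pairs C (id1 C x) (id1 C y) \<and> b \<in> hor_pairs C (id1 C x) (id1 C y)"
    using hor_pairs_id[OF assms] tr_gen_endo by blast
qed

lemma horrel_id_equiv:
  assumes "x \<in> Ob C" "y \<in> Ob C"
  shows "equiv (hor_pairs C (id1 C x) (id1 C y)) (horrel C (id1 C x) (id1 C y))"
  unfolding horrel_def by (rule equiv_equiv_gen[OF hor_gen_id_pairs[OF assms]])

lemma horrel_trrel:
  assumes x: "x \<in> Ob C" and y: "y \<in> Ob C" and ab: "(a, b) \<in> horrel C (id1 C x) (id1 C y)"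
  shows "(snd a, snd b) \<in> trrel C x y"
proof (rule equiv_gen_transfer[OF hor_gen_id_pairs[OF x y] trrel_equiv])
  show "snd c \<in> endo2 C x y" if "c \<in> hor_pairs C (id1 C x) (id1 C y)" for c
    using that hor_pairs_id[OF x y] by (cases c) auto
  show "(snd c, snd d) \<in> trrel C x y" if "(c, d) \<in> hor_gen C (id1 C x) (id1 C y)" for c d
    using hor_gen_id_tr_gen[OF x y that] tr_gen_trrel by (metis snd_conv)
  show "(a, b) \<in> equiv_gen (hor_pairs C (id1 C x) (id1 C y)) (hor_gen C (id1 C x) (id1 C y))"
    using ab unfolding horrel_def .
qed

lemma trrel_horrel:
  assumes x: "x \<in> Ob C" and y: "y \<in> Ob C" and \<sigma>: "(\<sigma>, \<sigma>') \<in> trrel C x y"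
  shows "((src2 C \<sigma>, \<sigma>), (src2 C \<sigma>', \<sigma>')) \<in> horrel C (id1 C x) (id1 C y)"
proof -
  have "((\<lambda>s. (src2 C s, s)) \<sigma>, (\<lambda>s. (src2 C s, s)) \<sigma>') \<in> horrel C (id1 C x) (id1 C y)"
  proof (rule equiv_gen_transfer[OF tr_gen_endo horrel_id_equiv[OF x y]])
    show "(src2 C s, s) \<in> hor_pairs C (id1 C x) (id1 C y)" if "s \<in> endo2 C x y" for s
      using that hor_pairs_id[OF x y] by simp
    show "((src2 C u, u), (src2 C v, v)) \<in> horrel C (id1 C x) (id1 C y)"
      if "(u, v) \<in> tr_gen C x y" for u v
      using tr_gen_hor_gen_id[OF x y that] equiv_gen_generators unfolding horrel_def by blast
    show "(\<sigma>, \<sigma>') \<in> equiv_gen (endo2 C x y) (tr_gen C x y)"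
      using \<sigma> unfolding trrel_def .
  qed
  then show ?thesis
    by simp
qed

lemma i_rep_class: "i_rep C x y \<sigma> = horrel C (id1 C x) (id1 C y) `` {(src2 C \<sigma>, \<sigma>)}"
  unfolding i_rep_def hor_class_def ..

lemma i_rep_eq_iff:
  assumes x: "x \<in> Ob C" and y: "y \<in> Ob C" and \<sigma>: "\<sigma> \<in> endo2 C x y" "\<sigma>' \<in> endo2 C x y"
  shows "i_rep C x y \<sigma> = i_rep C x y \<sigma>' \<longleftrightarrow> (\<sigma>, \<sigma>') \<in> trrel C x y"
  unfolding i_rep_class
  using eq_equiv_class_iff[OF horrel_id_equiv[OF x y]] hor_pairs_id[OF x y] \<sigma>
    horrel_trrel[OF x y] trrel_horrel[OF x y]
  by fastforce

lemma i_rep_trrel: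
  assumes "x \<in> Ob C" "y \<in> Ob C" "(\<sigma>, \<sigma>') \<in> trrel C x y"
  shows "i_rep C x y \<sigma> = i_rep C x y \<sigma>'"
  using i_rep_eq_iff[OF assms(1,2)] trrel_endo assms(3) by blast

lemma i_rep_hor_hom:
  assumes "x \<in> Ob C" "y \<in> Ob C" "\<sigma> \<in> endo2 C x y"
  shows "i_rep C x y \<sigma> \<in> hor_hom C (id1 C x) (id1 C y)"
  unfolding i_rep_class hor_hom_def using hor_pairs_id[OF assms(1,2)] assms(3) by (simp add: quotientI)

lemma i_rep_members:
  assumes x: "x \<in> Ob C" and y: "y \<in> Ob C" and b: "b \<in> i_rep C x y \<sigma>"
  obtains \<sigma>' where "b = (src2 C \<sigma>', \<sigma>')" "(\<sigma>, \<sigma>') \<in> trrel C x y"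
proof -
  have rel: "((src2 C \<sigma>, \<sigma>), b) \<in> horrel C (id1 C x) (id1 C y)"
    using b unfolding i_rep_class by simp
  then have "b \<in> hor_pairs C (id1 C x) (id1 C y)"
    using equiv_type[OF horrel_id_equiv[OF x y]] by blast
  then have "b = (src2 C (snd b), snd b)"
    using hor_pairs_id[OF x y] by (cases b) auto
  moreover have "(\<sigma>, snd b) \<in> trrel C x y"
    using horrel_trrel[OF x y rel] by simp
  ultimately show ?thesis
    using that by blast
qed

lemma i_rep_self:
  assumes "x \<in> Ob C" "y \<in> Ob C" "\<sigma> \<in> endo2 C x y"
  shows "(src2 C \<sigma>, \<sigma>) \<in> i_rep C x y \<sigma>"
  unfolding i_rep_class
  using equiv_class_self[OF horrel_id_equiv[OF assms(1,2)]] hor_pairs_id[OF assms(1,2)] assms(3) by simp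

lemma tr_hom_rep:
  assumes "S \<in> tr_hom C x y"
  shows "(SOME \<sigma>. \<sigma> \<in> S) \<in> endo2 C x y" and "S = tr_class C x y (SOME \<sigma>. \<sigma> \<in> S)"
  using equiv_Eps_preserves[OF trrel_equiv] proj_Eps[OF trrel_equiv] assms
  unfolding tr_hom_def tr_class_def proj_def by auto

lemma i_mor_class:
  assumes "x \<in> Ob C" "y \<in> Ob C" "\<sigma> \<in> endo2 C x y"
  shows "i_mor C x y (tr_class C x y \<sigma>) = i_rep C x y \<sigma>"
proof -
  have "tr_class C x y \<sigma> \<in> tr_hom C x y"
    unfolding tr_class_def tr_hom_def using assms(3) by (rule quotientI)
  then have "(SOME s. s \<in> tr_class C x y \<sigma>) \<in> tr_class C x y \<sigma>"
    unfolding tr_hom_def by (rule equiv_Eps_in[OF trrel_equiv])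
  then have "(\<sigma>, SOME s. s \<in> tr_class C x y \<sigma>) \<in> trrel C x y"
    unfolding tr_class_def by simp
  then show ?thesis
    unfolding i_mor_def using i_rep_trrel[OF assms(1,2)] by metis
qed

text \<open>The composite in Tr_hor of [src \<sigma>, \<sigma>] and [src \<tau>, \<tau>] has 2-cell (\<tau> \<circ> p)(q \<circ> \<sigma>), which by
  the interchange law is the horizontal composite \<tau> \<circ> \<sigma>.\<close>
lemma whiskered_interchange:
  assumes \<sigma>: "\<sigma> \<in> endo2 C x y" and \<tau>: "\<tau> \<in> endo2 C y z"
  shows "vcomp C (hcomp C \<tau> (id2 C (src2 C \<sigma>))) (hcomp C (id2 C (src2 C \<tau>)) \<sigma>) = hcomp C \<tau> \<sigma>"
proof -
  have \<sigma>': "\<sigma> \<in> Cell C" "src2 C \<sigma> = tgt2 C \<sigma>" "cod1 C (src2 C \<sigma>) = y"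
    using \<sigma> by (auto simp: endo2_iff)
  have \<tau>': "\<tau> \<in> Cell C" "src2 C \<tau> = tgt2 C \<tau>" "dom1 C (src2 C \<tau>) = y"
    using \<tau> by (auto simp: endo2_iff)
  have p: "id2 C (src2 C \<sigma>) \<in> Cell C" "src2 C (id2 C (src2 C \<sigma>)) = src2 C \<sigma>" "tgt2 C (id2 C (src2 C \<sigma>)) = src2 C \<sigma>"
    using id2_cell[OF conjunct1[OF cell_parallel[OF \<sigma>'(1)]]] by auto
  have q: "id2 C (src2 C \<tau>) \<in> Cell C" "src2 C (id2 C (src2 C \<tau>)) = src2 C \<tau>" "tgt2 C (id2 C (src2 C \<tau>)) = src2 C \<tau>"
    using id2_cell[OF conjunct1[OF cell_parallel[OF \<tau>'(1)]]] by auto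
  have "hcomp C (vcomp C \<tau> (id2 C (src2 C \<tau>))) (vcomp C (id2 C (src2 C \<sigma>)) \<sigma>)
      = vcomp C (hcomp C \<tau> (id2 C (src2 C \<sigma>))) (hcomp C (id2 C (src2 C \<tau>)) \<sigma>)"
    using interchange[OF \<sigma>'(1) p(1) q(1) \<tau>'(1)] p q \<sigma>' \<tau>' by simp
  moreover have "vcomp C \<tau> (id2 C (src2 C \<tau>)) = \<tau>" "vcomp C (id2 C (src2 C \<sigma>)) \<sigma> = \<sigma>"
    using vcomp_units[OF \<tau>'(1)] vcomp_units[OF \<sigma>'(1)] \<sigma>'(2) by auto
  ultimately show ?thesis
    by simp
qed

lemma hor_comp_i_rep:
  assumes x: "x \<in> Ob C" and y: "y \<in> Ob C" and z: "z \<in> Ob C"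
    and \<sigma>: "\<sigma> \<in> endo2 C x y" and \<tau>: "\<tau> \<in> endo2 C y z"
  shows "hor_comp C (id1 C x) (id1 C y) (id1 C z) (i_rep C y z \<tau>) (i_rep C x y \<sigma>) = i_rep C x z (hcomp C \<tau> \<sigma>)"
proof -
  obtain \<tau>1 where b: "(SOME b. b \<in> i_rep C y z \<tau>) = (src2 C \<tau>1, \<tau>1)" and \<tau>1: "(\<tau>, \<tau>1) \<in> trrel C y z"
    using i_rep_members[OF y z someI[where P = "\<lambda>b. b \<in> i_rep C y z \<tau>", OF i_rep_self[OF y z \<tau>]]] .
  obtain \<sigma>1 where a: "(SOME a. a \<in> i_rep C x y \<sigma>) = (src2 C \<sigma>1, \<sigma>1)" and \<sigma>1: "(\<sigma>, \<sigma>1) \<in> trrel C x y"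
    using i_rep_members[OF x y someI[where P = "\<lambda>a. a \<in> i_rep C x y \<sigma>", OF i_rep_self[OF x y \<sigma>]]] .
  have endos: "\<sigma>1 \<in> endo2 C x y" "\<tau>1 \<in> endo2 C y z"
    using trrel_endo \<sigma>1 \<tau>1 by blast+
  have src: "src2 C (hcomp C \<tau>1 \<sigma>1) = comp1 C (src2 C \<tau>1) (src2 C \<sigma>1)"
    using hcomp_cell endos by (auto simp: endo2_iff)
  have "hor_comp C (id1 C x) (id1 C y) (id1 C z) (i_rep C y z \<tau>) (i_rep C x y \<sigma>) = i_rep C x z (hcomp C \<tau>1 \<sigma>1)"
    unfolding hor_comp_def a b Let_def prod.case
    unfolding i_rep_def
    using whiskered_interchange[OF endos] src by simp
  also have "\<dots> = i_rep C x z (hcomp C \<tau> \<sigma>)"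
    using i_rep_trrel[OF x z] hcomp_trrel[OF \<sigma>1 \<tau>1] by simp
  finally show ?thesis .
qed

lemma i_mor_comp:
  assumes x: "x \<in> Ob C" and y: "y \<in> Ob C" and z: "z \<in> Ob C"
    and S: "S \<in> tr_hom C x y" and T: "T \<in> tr_hom C y z"
  shows "i_mor C x z (tr_comp C x y z T S) =
    hor_comp C (id1 C x) (id1 C y) (id1 C z) (i_mor C y z T) (i_mor C x y S)"
proof -
  let ?\<sigma> = "SOME \<sigma>. \<sigma> \<in> S" and ?\<tau> = "SOME \<tau>. \<tau> \<in> T"
  have "i_mor C x z (tr_comp C x y z T S) = i_rep C x z (hcomp C ?\<tau> ?\<sigma>)"
    unfolding tr_comp_def
    using i_mor_class[OF x z hcomp_endo[OF tr_hom_rep(1)[OF S] tr_hom_rep(1)[OF T]]] .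
  also have "\<dots> = hor_comp C (id1 C x) (id1 C y) (id1 C z) (i_rep C y z ?\<tau>) (i_rep C x y ?\<sigma>)"
    using hor_comp_i_rep[OF x y z tr_hom_rep(1)[OF S] tr_hom_rep(1)[OF T]] by simp
  finally show ?thesis
    unfolding i_mor_def .
qed

lemma i_mor_id:
  assumes x: "x \<in> Ob C"
  shows "i_mor C x x (tr_id C x) = hor_id C (id1 C x)"
proof -
  have 1: "id1 C x \<in> Arr C" "dom1 C (id1 C x) = x" "cod1 C (id1 C x) = x"
    using id1_arr[OF x] by auto
  then have e: "id2 C (id1 C x) \<in> endo2 C x x" and src: "src2 C (id2 C (id1 C x)) = id1 C x"
    using id2_cell[OF 1(1)] by (simp_all add: endo2_iff)
  show ?thesis
    unfolding tr_id_def i_mor_class[OF x x e] i_rep_def hor_id_def 1(2) src ..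
qed

lemma i_mor_bij:
  assumes x: "x \<in> Ob C" and y: "y \<in> Ob C"
  shows "bij_betw (i_mor C x y) (tr_hom C x y) (hor_hom C (id1 C x) (id1 C y))"
proof (rule bij_betw_imageI)
  show "inj_on (i_mor C x y) (tr_hom C x y)"
  proof (rule inj_onI)
    fix S S' assume S: "S \<in> tr_hom C x y" and S': "S' \<in> tr_hom C x y"
      and eq: "i_mor C x y S = i_mor C x y S'"
    then have "((SOME \<sigma>. \<sigma> \<in> S), (SOME \<sigma>. \<sigma> \<in> S')) \<in> trrel C x y"
      unfolding i_mor_def using i_rep_eq_iff[OF x y] tr_hom_rep(1) by blast
    then show "S = S'"
      using tr_hom_rep(2)[OF S] tr_hom_rep(2)[OF S'] equiv_class_eq[OF trrel_equiv]
      unfolding tr_class_def by metis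
  qed
  show "i_mor C x y ` tr_hom C x y = hor_hom C (id1 C x) (id1 C y)"
  proof
    show "i_mor C x y ` tr_hom C x y \<subseteq> hor_hom C (id1 C x) (id1 C y)"
      unfolding i_mor_def using i_rep_hor_hom[OF x y] tr_hom_rep(1) by blast
  next
    show "hor_hom C (id1 C x) (id1 C y) \<subseteq> i_mor C x y ` tr_hom C x y"
    proof
      fix B assume "B \<in> hor_hom C (id1 C x) (id1 C y)"
      then obtain p \<sigma> where p\<sigma>: "(p, \<sigma>) \<in> hor_pairs C (id1 C x) (id1 C y)"
          and B: "B = horrel C (id1 C x) (id1 C y) `` {(p, \<sigma>)}"
        unfolding hor_hom_def by (auto elim: quotientE)
      then have \<sigma>: "\<sigma> \<in> endo2 C x y" "p = src2 C \<sigma>"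
        using hor_pairs_id[OF x y] by auto
      then have "B = i_mor C x y (tr_class C x y \<sigma>)"
        using B i_mor_class[OF x y] i_rep_class by simp
      moreover have "tr_class C x y \<sigma> \<in> tr_hom C x y"
        unfolding tr_class_def tr_hom_def using \<sigma>(1) by (rule quotientI)
      ultimately show "B \<in> i_mor C x y ` tr_hom C x y"
        by blast
    qed
  qed
qed

end

theorem mainTheorem2:
  fixes C :: "('o, 'a, 'b) two_cat"
  assumes "strict_2cat C"
  shows
    \<comment> \<open>well-definedness: i sends objects to objects, representatives to valid pairs,
        and equivalent representatives to the same class\<close>
    "(\<forall>x\<in>Ob C. hor_obj C (i_obj C x)) \<and>
     (\<forall>x\<in>Ob C. \<forall>y\<in>Ob C. \<forall>\<sigma>\<in>endo2 C x y.
        (src2 C \<sigma>, \<sigma>) \<in> hor_pairs C (i_obj C x) (i_obj C y)) \<and>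
     (\<forall>x\<in>Ob C. \<forall>y\<in>Ob C. \<forall>\<sigma> \<sigma>'. (\<sigma>, \<sigma>') \<in> trrel C x y \<longrightarrow> i_rep C x y \<sigma> = i_rep C x y \<sigma>') \<and>
     (\<forall>x\<in>Ob C. \<forall>y\<in>Ob C. \<forall>\<sigma>\<in>endo2 C x y. i_mor C x y (tr_class C x y \<sigma>) = i_rep C x y \<sigma>) \<and>
     (\<forall>x\<in>Ob C. \<forall>y\<in>Ob C. \<forall>S\<in>tr_hom C x y.
        i_mor C x y S \<in> hor_hom C (i_obj C x) (i_obj C y)) \<and>
     \<comment> \<open>functoriality\<close>
     (\<forall>x\<in>Ob C. i_mor C x x (tr_id C x) = hor_id C (i_obj C x)) \<and>
     (\<forall>x\<in>Ob C. \<forall>y\<in>Ob C. \<forall>z\<in>Ob C. \<forall>S\<in>tr_hom C x y. \<forall>T\<in>tr_hom C y z.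
        i_mor C x z (tr_comp C x y z T S) =
        hor_comp C (i_obj C x) (i_obj C y) (i_obj C z) (i_mor C y z T) (i_mor C x y S)) \<and>
     \<comment> \<open>full and faithful\<close>
     (\<forall>x\<in>Ob C. \<forall>y\<in>Ob C.
        bij_betw (i_mor C x y) (tr_hom C x y) (hor_hom C (i_obj C x) (i_obj C y)))"
  unfolding i_obj_def
proof (intro conjI ballI allI impI)
  note C = assms
  show "hor_obj C (id1 C x)" if "x \<in> Ob C" for x
    using id1_arr[OF C that] unfolding hor_obj_def by simp
  show "(src2 C \<sigma>, \<sigma>) \<in> hor_pairs C (id1 C x) (id1 C y)"
    if "x \<in> Ob C" "y \<in> Ob C" "\<sigma> \<in> endo2 C x y" for x y \<sigma>
    using hor_pairs_id[OF C that(1,2)] that(3) by simp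
  show "i_rep C x y \<sigma> = i_rep C x y \<sigma>'"
    if "x \<in> Ob C" "y \<in> Ob C" "(\<sigma>, \<sigma>') \<in> trrel C x y" for x y \<sigma> \<sigma>'
    using i_rep_trrel[OF C that] .
  show "i_mor C x y (tr_class C x y \<sigma>) = i_rep C x y \<sigma>"
    if "x \<in> Ob C" "y \<in> Ob C" "\<sigma> \<in> endo2 C x y" for x y \<sigma>
    using i_mor_class[OF C that] .
  show "i_mor C x y S \<in> hor_hom C (id1 C x) (id1 C y)"
    if "x \<in> Ob C" "y \<in> Ob C" "S \<in> tr_hom C x y" for x y S
    using i_mor_bij[OF C that(1,2)] that(3) by (auto dest: bij_betw_apply)
  show "i_mor C x x (tr_id C x) = hor_id C (id1 C x)" if "x \<in> Ob C" for x
    using i_mor_id[OF C that] .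
  show "i_mor C x z (tr_comp C x y z T S) =
      hor_comp C (id1 C x) (id1 C y) (id1 C z) (i_mor C y z T) (i_mor C x y S)"
    if "x \<in> Ob C" "y \<in> Ob C" "z \<in> Ob C" "S \<in> tr_hom C x y" "T \<in> tr_hom C y z" for x y z S T
    using i_mor_comp[OF C that] .
  show "bij_betw (i_mor C x y) (tr_hom C x y) (hor_hom C (id1 C x) (id1 C y))"
    if "x \<in> Ob C" "y \<in> Ob C" for x y
    using i_mor_bij[OF C that] .
qed

end
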